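(* Let $m\ge1$, $n\ge1$, $N>2n$, and let $\mathbf y$ be a stationary reciprocal process of order $n$ on $\mathbb Z_N$ with conjugate process $\mathbf d(t)=\mathbf y(t)-\hat{\mathbb E}[\mathbf y(t)\mid\mathbf y(s),s\ne t]$. Then there exist constant matrices $F_{-n},\dots,F_{-1},F_1,\dots,F_n\in\mathbb R^{m\times m}$ such that, with $F_0=I_m$, $$\sum_{k=-n}^{n}F_k\,\mathbf y(t-k)=\mathbf d(t),\qquad t=1,\dots,N,$$ where the values outside $[1,N]$ are given by the cyclic boundary conditions $\mathbf y(k)=\mathbf y(N+k)$, $k=-n+1,\dots,n$. Equivalently, $\mathbf F_N\mathbf y=\mathbf d$, where $\mathbf F_N$ is the $mN\times mN$ banded block-circulant matrix whose first block column is $(I_m,F_1,\dots,F_n,0,\dots,0,F_{-n},\dots,F_{-1})$. If $\mathbf y$ is full rank, this description is unique.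
   Context: A process on $\mathbb Z_N$ is a zero-mean second-order $\mathbb R^m$-valued process $\{\mathbf y(t)\}_{t=1}^N$, time indices taken modulo $N$, whose covariance $\boldsymbol\Sigma_N=\mathbb E\,\mathbf y\mathbf y^\top$ is symmetric block-circulant (its $(i,j)$ block depends only on $(i-j)\bmod N$, so the block-circulant matrix is determined by its first block column); such a process is stationary. Full rank means $\boldsymbol\Sigma_N>0$. $\hat{\mathbb E}[\cdot\mid\cdot]$ is orthogonal projection onto the closed linear span of the scalar components of the conditioning variables. Subspaces $\mathcal A,\mathcal B$ are conditionally orthogonal given $\mathcal C$ if $a-\hat{\mathbb E}[a\mid\mathcal C]$ and $b-\hat{\mathbb E}[b\mid\mathcal C]$ are uncorrelated for all $a\in\mathcal A,b\in\mathcal B$. The process is reciprocal of order $n$ if for every cyclic interval $(t_1,t_2)$ the variables $\{\mathbf y(t):t\in(t_1,t_2)\}$ are conditionally orthogonal to $\{\mathbf y(s):s\notin(t_1,t_2)\}$ given $\mathbf y(t_1-n+1),\dots,\mathbf y(t_1),\mathbf y(t_2),\dots,\mathbf y(t_2+n-1)$. *)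

theory Defs
  imports "HOL-Analysis.Analysis"
begin

text \<open>A second-order R^m-valued process on Z_N is modelled as a family of vectors
  y t i (time t :: int, component i < m) in a real inner product space
  (the Hilbert space of zero-mean finite-variance random variables, inner product =
  covariance), periodic in t with period N.\<close>

definition proj :: "'a::real_inner set \<Rightarrow> 'a \<Rightarrow> 'a" where
  "proj S x = (THE p. p \<in> span S \<and> (\<forall>s\<in>S. inner (x - p) s = 0))"

definition cond_orth :: "'a::real_inner set \<Rightarrow> 'a set \<Rightarrow> 'a set \<Rightarrow> bool" where
  "cond_orth A B C \<longleftrightarrow>
     (\<forall>a\<in>span A. \<forall>b\<in>span B. inner (a - proj C a) (b - proj C b) = 0)"

definition vars :: "(int \<Rightarrow> nat \<Rightarrow> 'a) \<Rightarrow> nat \<Rightarrow> int set \<Rightarrow> 'a set" where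
  "vars y m T = {y t i | t i. t \<in> T \<and> i < m}"

definition periodic_proc :: "(int \<Rightarrow> nat \<Rightarrow> 'a) \<Rightarrow> nat \<Rightarrow> bool" where
  "periodic_proc y N \<longleftrightarrow> (\<forall>t i. y (t + int N) i = y t i)"

definition stationary :: "(int \<Rightarrow> nat \<Rightarrow> 'a::real_inner) \<Rightarrow> nat \<Rightarrow> bool" where
  "stationary y m \<longleftrightarrow>
     (\<forall>t s k i j. i < m \<longrightarrow> j < m \<longrightarrow> inner (y (t + k) i) (y (s + k) j) = inner (y t i) (y s j))"

definition reciprocal :: "(int \<Rightarrow> nat \<Rightarrow> 'a::real_inner) \<Rightarrow> nat \<Rightarrow> nat \<Rightarrow> nat \<Rightarrow> bool" where
  "reciprocal y m N n \<longleftrightarrow>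
     (\<forall>t1 t2::int. t1 < t2 \<longrightarrow>
        cond_orth (vars y m {t. t1 < t \<and> t < t2})
                  (vars y m {s. \<forall>t. t1 < t \<and> t < t2 \<longrightarrow> s mod int N \<noteq> t mod int N})
                  (vars y m ({t1 - int n + 1 .. t1} \<union> {t2 .. t2 + int n - 1})))"

definition conj_proc :: "(int \<Rightarrow> nat \<Rightarrow> 'a::real_inner) \<Rightarrow> nat \<Rightarrow> nat \<Rightarrow> int \<Rightarrow> nat \<Rightarrow> 'a" where
  "conj_proc y m N t i = y t i - proj (vars y m {s. s mod int N \<noteq> t mod int N}) (y t i)"

definition full_rank :: "(int \<Rightarrow> nat \<Rightarrow> 'a::real_inner) \<Rightarrow> nat \<Rightarrow> nat \<Rightarrow> bool" where
  "full_rank y m N \<longleftrightarrow>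
     (\<forall>c :: int \<Rightarrow> nat \<Rightarrow> real. (\<exists>t\<in>{1..int N}. \<exists>i<m. c t i \<noteq> 0) \<longrightarrow>
        (\<Sum>t\<in>{1..int N}. \<Sum>i<m. \<Sum>s\<in>{1..int N}. \<Sum>j<m.
            c t i * c s j * inner (y t i) (y s j)) > 0)"

text \<open>F k i j is the (i,j) entry of the m x m matrix F_k, k = -n..n.\<close>
definition recip_model :: "(int \<Rightarrow> nat \<Rightarrow> nat \<Rightarrow> real) \<Rightarrow> (int \<Rightarrow> nat \<Rightarrow> 'a::real_inner)
    \<Rightarrow> nat \<Rightarrow> nat \<Rightarrow> nat \<Rightarrow> (int \<Rightarrow> nat \<Rightarrow> 'a) \<Rightarrow> bool" where
  "recip_model F y m n N d \<longleftrightarrow>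
     (\<forall>i<m. \<forall>j<m. F 0 i j = (if i = j then 1 else 0)) \<and>
     (\<forall>t\<in>{1..int N}. \<forall>i<m.
        (\<Sum>k\<in>{- int n..int n}. \<Sum>j<m. F k i j *\<^sub>R y (t - k) j) = d t i)"

end

theory Submission
  imports Defs
begin

text \<open>Taking \<open>t\<^sub>1 = t - 1\<close> and \<open>t\<^sub>2 = t + 1\<close> in the reciprocal property, \<open>y(t)\<close> is
  conditionally orthogonal to all other variables given its \<open>2n\<close> neighbours
  \<open>y(t \<plusminus> 1), \<dots>, y(t \<plusminus> n)\<close>; as \<open>N > 2n\<close> these neighbours are among the other variables,
  so the projection of \<open>y(t)\<close> on all other variables is already its projection on the
  neighbours. By stationarity the coefficients of that projection do not depend on \<open>t\<close>,
  and \<open>F\<^sub>k\<close> is minus the coefficient of lag \<open>k\<close>. Uniqueness: two such models differ by a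
  vanishing linear combination of \<open>y(1), \<dots>, y(2n+1)\<close>, which full rank forbids.\<close>

lemma proj_eqI:
  fixes x :: "'a::real_inner"
  assumes "p \<in> span S" and "\<forall>s\<in>S. inner (x - p) s = 0"
  shows "proj S x = p"
  unfolding proj_def
proof (rule the_equality)
  fix q assume q: "q \<in> span S \<and> (\<forall>s\<in>S. inner (x - q) s = 0)"
  have "p - q \<in> span S"
    using q assms(1) by (simp add: span_diff)
  moreover have "\<forall>s\<in>S. orthogonal (p - q) s"
    using q assms(2) by (simp add: orthogonal_def inner_diff_left)
  ultimately have "orthogonal (p - q) (p - q)"
    using orthogonal_to_span by blast
  then show "q = p"
    by (simp add: orthogonal_def)
qed (use assms in auto)

lemma orthogonal_projection_exists:
  fixes x :: "'a::real_inner"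
  assumes "finite S"
  shows "\<exists>p\<in>span S. \<forall>s\<in>S. inner (x - p) s = 0"
  using assms
proof (induction arbitrary: x rule: finite_induct)
  case empty
  then show ?case by (auto simp: span_zero)
next
  case (insert a S)
  obtain p where p: "p \<in> span S" "\<forall>s\<in>S. orthogonal (x - p) s"
    using insert.IH by (auto simp: orthogonal_def)
  obtain q where q: "q \<in> span S" "\<forall>s\<in>S. orthogonal (a - q) s"
    using insert.IH by (auto simp: orthogonal_def)
  define e where "e = a - q"
  have span_mono_insert: "span S \<subseteq> span (insert a S)"
    by (simp add: span_mono subset_insertI)
  have e_span: "e \<in> span (insert a S)"
    unfolding e_def using q(1) span_mono_insert by (blast intro: span_diff span_base)
  have xp_S: "\<forall>s\<in>S. inner (x - p) s = 0" and e_S: "\<forall>s\<in>S. inner e s = 0"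
    using p(2) q(2) by (auto simp: e_def orthogonal_def)
  have xp_q: "inner (x - p) q = 0" and e_q: "inner e q = 0"
    using orthogonal_to_span[OF q(1)] p(2) q(2) by (auto simp: e_def orthogonal_def)
  \<comment> \<open>Gram--Schmidt: correct \<open>p\<close> along the component \<open>e\<close> of \<open>a\<close> orthogonal to \<open>span S\<close>.\<close>
  define \<alpha> where "\<alpha> = inner (x - p) e / inner e e"
  define r where "r = p + \<alpha> *\<^sub>R e"
  have "r \<in> span (insert a S)"
    unfolding r_def using p(1) span_mono_insert e_span by (blast intro: span_add span_scale)
  moreover have "\<forall>s\<in>S. inner (x - r) s = 0"
    using xp_S e_S by (simp add: r_def inner_diff_left inner_add_left)
  moreover have "inner (x - r) a = 0"
  proof (cases "e = 0")
    case True
    then have "a \<in> span S" using q(1) by (simp add: e_def)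
    then have "inner (x - p) a = 0"
      using orthogonal_to_span p(2) by (auto simp: orthogonal_def)
    then show ?thesis using True by (simp add: r_def)
  next
    case False
    have xr: "x - r = (x - p) - \<alpha> *\<^sub>R e" and a: "a = e + q"
      by (simp_all add: r_def e_def)
    have "inner (x - r) a = inner (x - p) e + inner (x - p) q - \<alpha> * (inner e e + inner e q)"
      unfolding xr a by (simp add: inner_diff_left inner_add_right algebra_simps)
    also have "\<dots> = inner (x - p) e - \<alpha> * inner e e"
      using xp_q e_q by simp
    also have "\<dots> = 0"
      using False by (simp add: \<alpha>_def)
    finally show ?thesis .
  qed
  ultimately show ?case by auto
qed

lemma proj_finite:
  fixes x :: "'a::real_inner"
  assumes "finite S"
  shows "proj S x \<in> span S" and "\<forall>s\<in>S. inner (x - proj S x) s = 0"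
  using orthogonal_projection_exists[OF assms, of x] proj_eqI by metis+

lemma proj_eq_proj_if_cond_orth:
  fixes a :: "'a::real_inner"
  assumes "cond_orth A B C" and "finite C" and "C \<subseteq> B" and "a \<in> span A"
  shows "proj B a = proj C a"
proof (rule proj_eqI)
  show "proj C a \<in> span B"
    using proj_finite(1)[OF assms(2)] span_mono[OF assms(3)] by blast
  show "\<forall>b\<in>B. inner (a - proj C a) b = 0"
  proof
    fix b assume "b \<in> B"
    then have "inner (a - proj C a) (b - proj C b) = 0"
      using assms(1,4) unfolding cond_orth_def by (blast intro: span_base)
    moreover have "inner (a - proj C a) (proj C b) = 0"
      using orthogonal_to_span[OF proj_finite(1)[OF assms(2)]] proj_finite(2)[OF assms(2)]
      by (auto simp: orthogonal_def)
    ultimately show "inner (a - proj C a) b = 0"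
      by (simp add: inner_diff_right)
  qed
qed

lemma span_image_lincomb:
  fixes f :: "'i \<Rightarrow> 'a::real_vector"
  assumes "finite I" and "v \<in> span (f ` I)"
  obtains c where "v = (\<Sum>i\<in>I. c i *\<^sub>R f i)"
proof -
  let ?L = "range (\<lambda>c. \<Sum>i\<in>I. c i *\<^sub>R f i)"
  have "subspace ?L"
    unfolding subspace_def
  proof (intro conjI ballI allI)
    show "0 \<in> ?L"
      by (rule range_eqI[of _ _ "\<lambda>_. 0"]) simp
  next
    fix u v assume "u \<in> ?L" "v \<in> ?L"
    then obtain cu cv where "u = (\<Sum>i\<in>I. cu i *\<^sub>R f i)" "v = (\<Sum>i\<in>I. cv i *\<^sub>R f i)"
      by auto
    then show "u + v \<in> ?L"
      by (auto intro!: range_eqI[of _ _ "\<lambda>i. cu i + cv i"] simp: scaleR_add_left sum.distrib)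
  next
    fix r :: real and u assume "u \<in> ?L"
    then obtain cu where "u = (\<Sum>i\<in>I. cu i *\<^sub>R f i)"
      by auto
    then show "r *\<^sub>R u \<in> ?L"
      by (auto intro!: range_eqI[of _ _ "\<lambda>i. r * cu i"] simp: scaleR_sum_right)
  qed
  moreover have "f i \<in> ?L" if "i \<in> I" for i
  proof (rule range_eqI[of _ _ "\<lambda>j. if j = i then 1 else 0"])
    have "(\<Sum>j\<in>I. (if j = i then 1 else 0) *\<^sub>R f j) = (\<Sum>j\<in>I. if j = i then f j else 0)"
      by (rule sum.cong) auto
    then show "f i = (\<Sum>j\<in>I. (if j = i then 1 else 0) *\<^sub>R f j)"
      using assms(1) that by simp
  qed
  ultimately have "v \<in> ?L"
    using span_minimal assms(2) by blast
  then show ?thesis using that by blast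
qed

definition lags :: "nat \<Rightarrow> int set" where
  "lags n = {- int n..int n} - {0}"

lemma finite_lags: "finite (lags n)"
  by (simp add: lags_def)

lemma vars_lagged: "vars y m ((\<lambda>k. t - k) ` K) = (\<lambda>(k, j). y (t - k) j) ` (K \<times> {..<m})"
  by (auto simp: vars_def)

lemma finite_vars_lagged: "finite K \<Longrightarrow> finite (vars y m ((\<lambda>k. t - k) ` K))"
  by (simp add: vars_lagged)

lemma span_vars_lagged_lincomb:
  fixes y :: "int \<Rightarrow> nat \<Rightarrow> 'a::real_inner"
  assumes "finite K" and "v \<in> span (vars y m ((\<lambda>k. t - k) ` K))"
  obtains c where "v = (\<Sum>k\<in>K. \<Sum>j<m. c k j *\<^sub>R y (t - k) j)"
proof -
  obtain c where "v = (\<Sum>(k, j)\<in>K \<times> {..<m}. c (k, j) *\<^sub>R y (t - k) j)"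
    using span_image_lincomb[of "K \<times> {..<m}" v "\<lambda>(k, j). y (t - k) j"] assms
    by (auto simp: vars_lagged case_prod_beta)
  then have "v = (\<Sum>k\<in>K. \<Sum>j<m. curry c k j *\<^sub>R y (t - k) j)"
    by (simp add: sum.cartesian_product)
  then show ?thesis using that by blast
qed

lemma neighbours_eq_lagged:
  "{t - 1 - int n + 1..t - 1} \<union> {t + 1..t + 1 + int n - 1} = (\<lambda>k. t - k) ` lags n"
  unfolding lags_def
proof (intro equalityI subsetI)
  fix s assume "s \<in> {t - 1 - int n + 1..t - 1} \<union> {t + 1..t + 1 + int n - 1}"
  then show "s \<in> (\<lambda>k. t - k) ` ({- int n..int n} - {0})"
    by (intro rev_image_eqI[of "t - s"]) auto
qed auto

lemma lagged_not_congruent: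
  fixes s t :: int
  assumes "N > 2 * n" and "s \<in> (\<lambda>k. t - k) ` lags n"
  shows "s mod int N \<noteq> t mod int N"
proof
  assume "s mod int N = t mod int N"
  then have "int N dvd (s - t)" by (simp add: mod_eq_dvd_iff)
  moreover from assms(2) have "s - t \<noteq> 0" and "\<bar>s - t\<bar> \<le> int n"
    by (auto simp: lags_def)
  ultimately have "int N \<le> int n"
    using dvd_imp_le_int[of "s - t" "int N"] by simp
  then show False using assms(1) by simp
qed

lemma reciprocal_proj_others_eq_proj_lagged:
  fixes y :: "int \<Rightarrow> nat \<Rightarrow> 'a::real_inner"
  assumes "reciprocal y m N n" and "N > 2 * n" and "i < m"
  shows "proj (vars y m {s. s mod int N \<noteq> t mod int N}) (y t i)
       = proj (vars y m ((\<lambda>k. t - k) ` lags n)) (y t i)"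
proof (rule proj_eq_proj_if_cond_orth)
  have "t - 1 < t' \<and> t' < t + 1 \<longleftrightarrow> t' = t" for t'
    by arith
  then show "cond_orth (vars y m {t}) (vars y m {s. s mod int N \<noteq> t mod int N})
      (vars y m ((\<lambda>k. t - k) ` lags n))"
    using assms(1)[unfolded reciprocal_def, rule_format, of "t - 1" "t + 1"]
    unfolding neighbours_eq_lagged by simp
  show "finite (vars y m ((\<lambda>k. t - k) ` lags n))"
    by (simp add: finite_vars_lagged finite_lags)
  show "vars y m ((\<lambda>k. t - k) ` lags n) \<subseteq> vars y m {s. s mod int N \<noteq> t mod int N}"
    unfolding vars_def using lagged_not_congruent[OF assms(2)] by blast
  show "y t i \<in> span (vars y m {t})"
    using assms(3) by (intro span_base) (auto simp: vars_def)
qed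

lemma stationary_inner_shift:
  assumes "stationary y m" and "i < m" and "j < m"
  shows "inner (y (t - k) i) (y (t - l) j) = inner (y (- k) i) (y (- l) j)"
  using assms unfolding stationary_def by (metis add.commute diff_conv_add_uminus)

lemma stationary_proj_lagged_shift:
  fixes y :: "int \<Rightarrow> nat \<Rightarrow> 'a::real_inner"
  assumes "stationary y m" and "i < m" and "finite K"
    and "proj (vars y m ((\<lambda>k. 0 - k) ` K)) (y 0 i) = (\<Sum>k\<in>K. \<Sum>j<m. c k j *\<^sub>R y (0 - k) j)"
  shows "proj (vars y m ((\<lambda>k. t - k) ` K)) (y t i) = (\<Sum>k\<in>K. \<Sum>j<m. c k j *\<^sub>R y (t - k) j)"
proof (rule proj_eqI)
  show "(\<Sum>k\<in>K. \<Sum>j<m. c k j *\<^sub>R y (t - k) j) \<in> span (vars y m ((\<lambda>k. t - k) ` K))"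
    by (intro span_sum span_scale span_base) (auto simp: vars_def)
  have "\<forall>s\<in>vars y m ((\<lambda>k. 0 - k) ` K). inner (y 0 i - (\<Sum>k\<in>K. \<Sum>j<m. c k j *\<^sub>R y (0 - k) j)) s = 0"
    using proj_finite(2)[OF finite_vars_lagged[OF assms(3)], of y m 0 "y 0 i"] assms(4) by simp
  then have orth0: "inner (y 0 i - (\<Sum>k\<in>K. \<Sum>j<m. c k j *\<^sub>R y (- k) j)) (y (- l) j') = 0"
    if "l \<in> K" "j' < m" for l j'
    using that by (auto simp: vars_def)
  show "\<forall>s\<in>vars y m ((\<lambda>k. t - k) ` K).
      inner (y t i - (\<Sum>k\<in>K. \<Sum>j<m. c k j *\<^sub>R y (t - k) j)) s = 0"
  proof
    fix s assume "s \<in> vars y m ((\<lambda>k. t - k) ` K)"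
    then obtain l j' where l: "l \<in> K" "j' < m" "s = y (t - l) j'"
      by (auto simp: vars_def)
    have "inner (y t i - (\<Sum>k\<in>K. \<Sum>j<m. c k j *\<^sub>R y (t - k) j)) (y (t - l) j')
        = inner (y 0 i - (\<Sum>k\<in>K. \<Sum>j<m. c k j *\<^sub>R y (- k) j)) (y (- l) j')"
      using stationary_inner_shift[OF assms(1) _ l(2), of _ t]
        stationary_inner_shift[OF assms(1) assms(2) l(2), of t 0]
      by (simp add: inner_diff_left inner_sum_left)
    then show "inner (y t i - (\<Sum>k\<in>K. \<Sum>j<m. c k j *\<^sub>R y (t - k) j)) s = 0"
      using orth0 l by simp
  qed
qed

lemma reciprocal_interpolation_coeffs:
  fixes y :: "int \<Rightarrow> nat \<Rightarrow> 'a::real_inner"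
  assumes "reciprocal y m N n" and "N > 2 * n" and "stationary y m" and "i < m"
  shows "\<exists>c. \<forall>t. proj (vars y m {s. s mod int N \<noteq> t mod int N}) (y t i)
             = (\<Sum>k\<in>lags n. \<Sum>j<m. c k j *\<^sub>R y (t - k) j)"
proof -
  have "finite (vars y m ((\<lambda>k. 0 - k) ` lags n))"
    by (rule finite_vars_lagged[OF finite_lags])
  then obtain c where "proj (vars y m ((\<lambda>k. 0 - k) ` lags n)) (y 0 i)
      = (\<Sum>k\<in>lags n. \<Sum>j<m. c k j *\<^sub>R y (0 - k) j)"
    using span_vars_lagged_lincomb[OF finite_lags proj_finite(1)] by blast
  then have "proj (vars y m ((\<lambda>k. t - k) ` lags n)) (y t i)
      = (\<Sum>k\<in>lags n. \<Sum>j<m. c k j *\<^sub>R y (t - k) j)" for t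
    by (rule stationary_proj_lagged_shift[OF assms(3,4) finite_lags])
  then show ?thesis
    using reciprocal_proj_others_eq_proj_lagged[OF assms(1,2,4)] by auto
qed

lemma recip_model_exists:
  fixes y :: "int \<Rightarrow> nat \<Rightarrow> 'a::real_inner"
  assumes "reciprocal y m N n" and "N > 2 * n" and "stationary y m"
  shows "\<exists>F. recip_model F y m n N (conj_proc y m N)"
proof -
  have "\<exists>c. i < m \<longrightarrow> (\<forall>t. proj (vars y m {s. s mod int N \<noteq> t mod int N}) (y t i)
      = (\<Sum>k\<in>lags n. \<Sum>j<m. c k j *\<^sub>R y (t - k) j))" for i
    using reciprocal_interpolation_coeffs[OF assms, of i] by (cases "i < m") simp_all
  from choice[OF allI[OF this]] obtain c where c: "\<forall>i. i < m \<longrightarrow>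
      (\<forall>t. proj (vars y m {s. s mod int N \<noteq> t mod int N}) (y t i)
        = (\<Sum>k\<in>lags n. \<Sum>j<m. c i k j *\<^sub>R y (t - k) j))" ..
  define F where "F k i j = (if k = 0 then (if i = j then 1 else 0) else - c i k j)" for k i j
  have "(\<Sum>k\<in>{- int n..int n}. \<Sum>j<m. F k i j *\<^sub>R y (t - k) j) = conj_proc y m N t i"
    if "i < m" for t i
  proof -
    have "(\<Sum>j<m. F 0 i j *\<^sub>R y t j) = (\<Sum>j<m. if j = i then y t j else 0)"
      by (rule sum.cong) (auto simp: F_def)
    also have "\<dots> = y t i"
      using that by simp
    finally have F0: "(\<Sum>j<m. F 0 i j *\<^sub>R y t j) = y t i" .
    have "(\<Sum>k\<in>{- int n..int n}. \<Sum>j<m. F k i j *\<^sub>R y (t - k) j)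
        = (\<Sum>j<m. F 0 i j *\<^sub>R y t j) + (\<Sum>k\<in>lags n. \<Sum>j<m. F k i j *\<^sub>R y (t - k) j)"
      unfolding lags_def by (subst sum.remove[of _ 0]) auto
    also have "\<dots> = y t i - (\<Sum>k\<in>lags n. \<Sum>j<m. c i k j *\<^sub>R y (t - k) j)"
      unfolding F0 by (simp add: F_def lags_def sum_negf)
    finally show ?thesis
      unfolding conj_proc_def using c that by simp
  qed
  then have "recip_model F y m n N (conj_proc y m N)"
    by (simp add: recip_model_def F_def)
  then show ?thesis by blast
qed

lemma full_rank_lincomb_eq_0:
  fixes y :: "int \<Rightarrow> nat \<Rightarrow> 'a::real_inner"
  assumes "full_rank y m N"
    and "(\<Sum>s\<in>{1..int N}. \<Sum>j<m. c s j *\<^sub>R y s j) = 0"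
    and "s \<in> {1..int N}" and "j < m"
  shows "c s j = 0"
proof (rule ccontr)
  let ?v = "\<Sum>s\<in>{1..int N}. \<Sum>j<m. c s j *\<^sub>R y s j"
  assume "c s j \<noteq> 0"
  then have "0 < (\<Sum>t\<in>{1..int N}. \<Sum>i<m. \<Sum>s\<in>{1..int N}. \<Sum>j<m.
      c t i * c s j * inner (y t i) (y s j))"
    using assms(1,3,4) unfolding full_rank_def by blast
  also have "\<dots> = (\<Sum>t\<in>{1..int N}. \<Sum>i<m. c t i * inner (y t i) ?v)"
    by (simp add: inner_sum_right sum_distrib_left mult.assoc)
  also have "\<dots> = inner ?v ?v"
    by (simp add: inner_sum_left)
  finally show False
    using assms(2) by simp
qed

lemma recip_model_unique:
  fixes y :: "int \<Rightarrow> nat \<Rightarrow> 'a::real_inner"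
  assumes "N > 2 * n" and "full_rank y m N"
    and F: "recip_model F y m n N d" and G: "recip_model G y m n N d"
    and "k \<in> {- int n..int n}" and "i < m" and "j < m"
  shows "F k i j = G k i j"
proof -
  \<comment> \<open>Compare the two models at \<open>t\<^sub>0 = n + 1\<close>, whose lags \<open>t\<^sub>0 - k\<close> all lie in \<open>{1..N}\<close>.\<close>
  define t\<^sub>0 where "t\<^sub>0 = int n + 1"
  define c where "c s j = (if s \<in> {1..2 * int n + 1}
      then F (t\<^sub>0 - s) i j - G (t\<^sub>0 - s) i j else 0)" for s j
  have "t\<^sub>0 \<in> {1..int N}"
    using assms(1) by (simp add: t\<^sub>0_def)
  then have "(\<Sum>k\<in>{- int n..int n}. \<Sum>j<m. (F k i j - G k i j) *\<^sub>R y (t\<^sub>0 - k) j) = 0"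
    using F G assms(6)
    by (simp add: recip_model_def scaleR_diff_left sum_subtractf)
  also have "(\<Sum>k\<in>{- int n..int n}. \<Sum>j<m. (F k i j - G k i j) *\<^sub>R y (t\<^sub>0 - k) j)
      = (\<Sum>s\<in>{1..2 * int n + 1}. \<Sum>j<m. c s j *\<^sub>R y s j)"
    by (rule sum.reindex_bij_witness[of _ "\<lambda>s. t\<^sub>0 - s" "\<lambda>k. t\<^sub>0 - k"])
      (auto simp: c_def t\<^sub>0_def)
  also have "\<dots> = (\<Sum>s\<in>{1..int N}. \<Sum>j<m. c s j *\<^sub>R y s j)"
    by (rule sum.mono_neutral_left) (use assms(1) in \<open>auto simp: c_def\<close>)
  finally have "c (t\<^sub>0 - k) j = 0"
    using full_rank_lincomb_eq_0[OF assms(2)] assms(1,5,7) by (auto simp: t\<^sub>0_def)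
  then show ?thesis
    using assms(5) by (simp add: c_def t\<^sub>0_def)
qed

theorem theorem1:
  fixes y :: "int \<Rightarrow> nat \<Rightarrow> 'a::real_inner" and m n N :: nat
  assumes "m \<ge> 1" and "n \<ge> 1" and "N > 2 * n"
    and "periodic_proc y N" and "stationary y m" and "reciprocal y m N n"
  shows "(\<exists>F. recip_model F y m n N (conj_proc y m N)) \<and>
         (full_rank y m N \<longrightarrow>
            (\<forall>F G. recip_model F y m n N (conj_proc y m N) \<and> recip_model G y m n N (conj_proc y m N)
               \<longrightarrow> (\<forall>k\<in>{- int n..int n}. \<forall>i<m. \<forall>j<m. F k i j = G k i j)))"
  using recip_model_exists[OF assms(6,3,5)] recip_model_unique[OF assms(3)] by blast

end
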